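(* In the setting described in the context, assume that there exists a capacity $\mu:2^{\mathcal C}\to L$ with $S_\mu(x^{(k)})=\alpha^{(k)}$ for all $k$ (equivalently, $(S)$ is consistent and $e(\mathcal C)=1$; equivalently, $(\Sigma)$ is consistent and $f(\emptyset)=0$). Define $\mu_e(\emptyset)=0$, $\mu_e(A)=e(A)$ for $A\neq\emptyset$, and $\mu_f(\mathcal C)=1$, $\mu_f(A)=f(A)$ for $A\subsetneq\mathcal C$. Then: (i) $\mu_e$ is a capacity representing the training data, and it is the greatest such capacity; (ii) $\mu_f$ is a capacity representing the training data, and it is the lowest such capacity; (iii) every capacity $\mu:2^{\mathcal C}\to L$ representing the training data satisfies $\mu_f\le\mu\le\mu_e$ (pointwise on $2^{\mathcal C}$).
   Context: Let $\mathcal C=\{1,\dots,n\}$ and let $L$ be either a finite totally ordered set $0=\xi_1<\dots<\xi_l=1$ or $L=[0,1]$. A capacity is a map $\mu:2^{\mathcal C}\to L$ with $\mu(\emptyset)=0$, $\mu(\mathcal C)=1$, monotone for inclusion. Sugeno integral: $S_\mu(x)=\max_{A\subseteq\mathcal C}\min(\min_{i\in A}x_i,\mu(A))$ with $\min_{i\in\emptyset}x_i=1$. A capacity represents the training data $(x^{(k)},\alpha^{(k)})_{1\le k\le N}$ ($x^{(k)}\in L^n$, $\alpha^{(k)}\in L$) if $S_\mu(x^{(k)})=\alpha^{(k)}$ for all $k$. For nonempty $A$, $m_{k,A}=\min_{i\in A}x^{(k)}_i$; for $A\subsetneq\mathcal C$, $\gamma_{k,A}=\max_{i\in\mathcal C\setminus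 A}x^{(k)}_i$. $(S)$: unknowns $\xi_A$ ($A\ne\emptyset$), equations $\max_{A\ne\emptyset}\min(m_{k,A},\xi_A)=\alpha^{(k)}$; $(\Sigma)$: unknowns $\xi_A$ ($A\subsetneq\mathcal C$), equations $\min_{A\subsetneq\mathcal C}\max(\gamma_{k,A},\xi_A)=\alpha^{(k)}$. Gödel implication $a\to_G b=1$ if $a\le b$, else $b$; epsilon product $a\,\epsilon\,b=b$ if $a<b$, else $0$. $e(A)=\min_k(m_{k,A}\to_G\alpha^{(k)})$, $f(B)=\max_k(\gamma_{k,B}\,\epsilon\,\alpha^{(k)})$. *)

theory Defs
  imports Complex_Main
begin

definition crit :: "nat \<Rightarrow> nat set" where
  "crit n = {1..n}"

definition valid_scale :: "real set \<Rightarrow> bool" where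
  "valid_scale L \<longleftrightarrow> (finite L \<and> 0 \<in> L \<and> 1 \<in> L \<and> L \<subseteq> {0..1}) \<or> L = {0..1}"

definition capacity :: "real set \<Rightarrow> nat \<Rightarrow> (nat set \<Rightarrow> real) \<Rightarrow> bool" where
  "capacity L n \<mu> \<longleftrightarrow>
     \<mu> {} = 0 \<and> \<mu> (crit n) = 1 \<and>
     (\<forall>A B. A \<subseteq> B \<and> B \<subseteq> crit n \<longrightarrow> \<mu> A \<le> \<mu> B) \<and>
     (\<forall>A. A \<subseteq> crit n \<longrightarrow> \<mu> A \<in> L)"

definition minset :: "(nat \<Rightarrow> real) \<Rightarrow> nat set \<Rightarrow> real" where
  "minset x A = (if A = {} then 1 else Min (x ` A))"

definition sugeno :: "nat \<Rightarrow> (nat set \<Rightarrow> real) \<Rightarrow> (nat \<Rightarrow> real) \<Rightarrow> real" where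
  "sugeno n \<mu> x = Max ((\<lambda>A. min (minset x A) (\<mu> A)) ` Pow (crit n))"

definition represents :: "nat \<Rightarrow> nat \<Rightarrow> (nat \<Rightarrow> nat \<Rightarrow> real) \<Rightarrow> (nat \<Rightarrow> real)
    \<Rightarrow> (nat set \<Rightarrow> real) \<Rightarrow> bool" where
  "represents n N x \<alpha> \<mu> \<longleftrightarrow> (\<forall>k \<in> {1..N}. sugeno n \<mu> (x k) = \<alpha> k)"

definition godel_imp :: "real \<Rightarrow> real \<Rightarrow> real" where
  "godel_imp a b = (if a \<le> b then 1 else b)"

definition eps_prod :: "real \<Rightarrow> real \<Rightarrow> real" where
  "eps_prod a b = (if a < b then b else 0)"

definition m_val :: "(nat \<Rightarrow> nat \<Rightarrow> real) \<Rightarrow> nat \<Rightarrow> nat set \<Rightarrow> real" where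
  "m_val x k A = Min (x k ` A)"

definition gamma_val :: "nat \<Rightarrow> (nat \<Rightarrow> nat \<Rightarrow> real) \<Rightarrow> nat \<Rightarrow> nat set \<Rightarrow> real" where
  "gamma_val n x k A = Max (x k ` (crit n - A))"

text \<open>e(A) = min_k (m_{k,A} ->_G alpha_k); f(B) = max_k (gamma_{k,B} eps alpha_k).
  The extra 1 (resp. 0) only matters for N = 0 and is the neutral element.\<close>
definition e_fun :: "nat \<Rightarrow> (nat \<Rightarrow> nat \<Rightarrow> real) \<Rightarrow> (nat \<Rightarrow> real) \<Rightarrow> nat set \<Rightarrow> real" where
  "e_fun N x \<alpha> A = Min (insert 1 ((\<lambda>k. godel_imp (m_val x k A) (\<alpha> k)) ` {1..N}))"

definition f_fun :: "nat \<Rightarrow> nat \<Rightarrow> (nat \<Rightarrow> nat \<Rightarrow> real) \<Rightarrow> (nat \<Rightarrow> real) \<Rightarrow> nat set \<Rightarrow> real" where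
  "f_fun n N x \<alpha> B = Max (insert 0 ((\<lambda>k. eps_prod (gamma_val n x k B) (\<alpha> k)) ` {1..N}))"

definition mu_e :: "nat \<Rightarrow> (nat \<Rightarrow> nat \<Rightarrow> real) \<Rightarrow> (nat \<Rightarrow> real) \<Rightarrow> nat set \<Rightarrow> real" where
  "mu_e N x \<alpha> A = (if A = {} then 0 else e_fun N x \<alpha> A)"

definition mu_f :: "nat \<Rightarrow> nat \<Rightarrow> (nat \<Rightarrow> nat \<Rightarrow> real) \<Rightarrow> (nat \<Rightarrow> real) \<Rightarrow> nat set \<Rightarrow> real" where
  "mu_f n N x \<alpha> A = (if A = crit n then 1 else f_fun n N x \<alpha> A)"

end

theory Submission
  imports Defs
begin

text \<open>A representing capacity mu satisfies min(m_{k,A}, mu(A)) \<le> alpha_k for every A, which by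
  residuation of min with respect to the Goedel implication means mu(A) \<le> e(A). It also reaches
  alpha_k on some A all of whose criteria have x^(k)_i \<ge> alpha_k; if gamma_{k,B} < alpha_k such
  an A lies inside B, so mu(B) \<ge> alpha_k, i.e. mu \<ge> f. Hence mu_f \<le> mu \<le> mu_e, which in
  particular forces mu_e(C) = 1 and mu_f(\<emptyset>) = 0. Both functions are monotone with values among
  the alpha_k, 0 and 1, so they are capacities. Finally S_{mu_e}(x^(k)) \<le> alpha_k \<le> S_{mu_f}(x^(k))
  hold by construction, and the reverse inequalities follow from mu_f \<le> mu \<le> mu_e because the
  Sugeno integral is monotone in the capacity.\<close>

lemma finite_crit [simp]: "finite (crit n)"
  by (simp add: crit_def)

lemma sugeno_le_iff:
  "sugeno n \<mu> y \<le> c \<longleftrightarrow> (\<forall>A \<subseteq> crit n. min (minset y A) (\<mu> A) \<le> c)"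
  unfolding sugeno_def by (subst Max_le_iff) auto

lemma sugeno_ge_iff:
  "c \<le> sugeno n \<mu> y \<longleftrightarrow> (\<exists>A \<subseteq> crit n. c \<le> min (minset y A) (\<mu> A))"
  unfolding sugeno_def by (subst Max_ge_iff) auto

lemma sugeno_mono:
  assumes "\<And>A. A \<subseteq> crit n \<Longrightarrow> \<mu> A \<le> \<nu> A"
  shows "sugeno n \<mu> y \<le> sugeno n \<nu> y"
  unfolding sugeno_le_iff
proof (intro allI impI)
  fix A assume A: "A \<subseteq> crit n"
  have "min (minset y A) (\<mu> A) \<le> min (minset y A) (\<nu> A)"
    using assms[OF A] by (rule min.mono[OF order_refl])
  also have "\<dots> \<le> sugeno n \<nu> y"
    using A by (auto simp: sugeno_ge_iff)
  finally show "min (minset y A) (\<mu> A) \<le> sugeno n \<nu> y" .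
qed

lemma minset_eq_m_val: "A \<noteq> {} \<Longrightarrow> minset (x k) A = m_val x k A"
  by (simp add: minset_def m_val_def)

lemma minset_ge_iff:
  "finite A \<Longrightarrow> c \<le> minset y A \<longleftrightarrow> (A = {} \<longrightarrow> c \<le> 1) \<and> (\<forall>i \<in> A. c \<le> y i)"
  unfolding minset_def by simp

lemma m_val_antimono:
  "A \<subseteq> B \<Longrightarrow> finite B \<Longrightarrow> A \<noteq> {} \<Longrightarrow> m_val x k B \<le> m_val x k A"
  unfolding m_val_def by (rule Min_antimono) (auto dest: finite_subset)

lemma gamma_val_less_iff:
  "A \<subset> crit n \<Longrightarrow> gamma_val n x k A < c \<longleftrightarrow> (\<forall>i \<in> crit n - A. x k i < c)"
  unfolding gamma_val_def by (subst Max_less_iff) auto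

lemma gamma_val_antimono:
  "A \<subseteq> B \<Longrightarrow> B \<subset> crit n \<Longrightarrow> gamma_val n x k B \<le> gamma_val n x k A"
  unfolding gamma_val_def by (rule Max_mono) auto

lemma godel_imp_antimono: "a' \<le> a \<Longrightarrow> b \<le> 1 \<Longrightarrow> godel_imp a b \<le> godel_imp a' b"
  by (simp add: godel_imp_def)

lemma eps_prod_antimono: "a' \<le> a \<Longrightarrow> 0 \<le> b \<Longrightarrow> eps_prod a b \<le> eps_prod a' b"
  by (simp add: eps_prod_def)

lemma e_fun_ge_iff:
  "c \<le> e_fun N x \<alpha> A \<longleftrightarrow> c \<le> 1 \<and> (\<forall>k \<in> {1..N}. c \<le> godel_imp (m_val x k A) (\<alpha> k))"
  unfolding e_fun_def by (subst Min_ge_iff) auto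

lemma e_fun_le: "k \<in> {1..N} \<Longrightarrow> e_fun N x \<alpha> A \<le> godel_imp (m_val x k A) (\<alpha> k)"
  unfolding e_fun_def by (rule Min_le) auto

lemma e_fun_le_one: "e_fun N x \<alpha> A \<le> 1"
  unfolding e_fun_def by (rule Min_le) auto

lemma e_fun_in: "e_fun N x \<alpha> A \<in> insert 1 (\<alpha> ` {1..N})"
proof -
  have "e_fun N x \<alpha> A \<in> insert 1 ((\<lambda>k. godel_imp (m_val x k A) (\<alpha> k)) ` {1..N})"
    unfolding e_fun_def by (rule Min_in) auto
  then show ?thesis by (auto simp: godel_imp_def split: if_splits)
qed

lemma f_fun_le_iff:
  "f_fun n N x \<alpha> A \<le> c \<longleftrightarrow> 0 \<le> c \<and> (\<forall>k \<in> {1..N}. eps_prod (gamma_val n x k A) (\<alpha> k) \<le> c)"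
  unfolding f_fun_def by (subst Max_le_iff) auto

lemma f_fun_ge: "k \<in> {1..N} \<Longrightarrow> eps_prod (gamma_val n x k A) (\<alpha> k) \<le> f_fun n N x \<alpha> A"
  unfolding f_fun_def by (rule Max_ge) auto

lemma f_fun_nonneg: "0 \<le> f_fun n N x \<alpha> A"
  unfolding f_fun_def by (rule Max_ge) auto

lemma f_fun_in: "f_fun n N x \<alpha> A \<in> insert 0 (\<alpha> ` {1..N})"
proof -
  have "f_fun n N x \<alpha> A \<in> insert 0 ((\<lambda>k. eps_prod (gamma_val n x k A) (\<alpha> k)) ` {1..N})"
    unfolding f_fun_def by (rule Max_in) auto
  then show ?thesis by (auto simp: eps_prod_def split: if_splits)
qed

lemma capacity_mono: "capacity L n \<mu> \<Longrightarrow> A \<subseteq> B \<Longrightarrow> B \<subseteq> crit n \<Longrightarrow> \<mu> A \<le> \<mu> B"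
  unfolding capacity_def by blast

lemma capacity_bounds:
  assumes "capacity L n \<mu>" "A \<subseteq> crit n"
  shows "0 \<le> \<mu> A" "\<mu> A \<le> 1"
  using capacity_mono[OF assms(1) empty_subsetI assms(2)]
    capacity_mono[OF assms order_refl] assms(1)
  by (auto simp: capacity_def)

lemma capacity_scale_contains_0_1: "capacity L n \<mu> \<Longrightarrow> {0, 1} \<subseteq> L"
  unfolding capacity_def by (metis empty_subsetI insert_subset order_refl)

lemma capacity_crit_nonempty: "capacity L n \<mu> \<Longrightarrow> crit n \<noteq> {}"
  unfolding capacity_def by auto

lemma represents_sugeno: "represents n N x \<alpha> \<mu> \<Longrightarrow> k \<in> {1..N} \<Longrightarrow> sugeno n \<mu> (x k) = \<alpha> k"
  unfolding represents_def by blast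

lemma capacity_le_mu_e:
  assumes cap: "capacity L n \<mu>" and rep: "represents n N x \<alpha> \<mu>" and A: "A \<subseteq> crit n"
  shows "\<mu> A \<le> mu_e N x \<alpha> A"
proof (cases "A = {}")
  case True
  then show ?thesis using cap by (simp add: capacity_def mu_e_def)
next
  case False
  have "\<mu> A \<le> godel_imp (m_val x k A) (\<alpha> k)" if k: "k \<in> {1..N}" for k
  proof -
    have "min (minset (x k) A) (\<mu> A) \<le> \<alpha> k"
      using sugeno_le_iff[of n \<mu> "x k" "\<alpha> k"] represents_sugeno[OF rep k] A by simp
    then show ?thesis
      using capacity_bounds(2)[OF cap A] minset_eq_m_val[OF False] by (auto simp: godel_imp_def)
  qed
  then show ?thesis
    using False capacity_bounds(2)[OF cap A] by (simp add: mu_e_def e_fun_ge_iff)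
qed

lemma mu_f_le_capacity:
  assumes cap: "capacity L n \<mu>" and rep: "represents n N x \<alpha> \<mu>" and A: "A \<subseteq> crit n"
  shows "mu_f n N x \<alpha> A \<le> \<mu> A"
proof (cases "A = crit n")
  case True
  then show ?thesis using cap by (simp add: capacity_def mu_f_def)
next
  case False
  with A have proper: "A \<subset> crit n" by auto
  have "eps_prod (gamma_val n x k A) (\<alpha> k) \<le> \<mu> A" if k: "k \<in> {1..N}" for k
  proof (cases "gamma_val n x k A < \<alpha> k")
    case True
    then have outside: "x k i < \<alpha> k" if "i \<in> crit n - A" for i
      using that gamma_val_less_iff[OF proper] by blast
    obtain B where B: "B \<subseteq> crit n" "\<alpha> k \<le> minset (x k) B" "\<alpha> k \<le> \<mu> B"
      using sugeno_ge_iff[of "\<alpha> k" n \<mu> "x k"] represents_sugeno[OF rep k] by auto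
    have "B \<subseteq> A"
    proof
      fix i assume i: "i \<in> B"
      have "\<alpha> k \<le> x k i"
        using B(2) minset_ge_iff[OF finite_subset[OF B(1) finite_crit]] i by blast
      then show "i \<in> A"
        using outside B(1) i by (meson Diff_iff not_le subsetD)
    qed
    then have "\<alpha> k \<le> \<mu> A"
      using B(3) capacity_mono[OF cap _ A] by (meson order_trans)
    then show ?thesis
      using True by (simp add: eps_prod_def)
  next
    case False
    then show ?thesis using capacity_bounds(1)[OF cap A] by (simp add: eps_prod_def)
  qed
  then show ?thesis
    using False capacity_bounds(1)[OF cap A] by (simp add: mu_f_def f_fun_le_iff)
qed

lemma mu_e_mono:
  assumes alpha: "\<forall>k \<in> {1..N}. \<alpha> k \<in> {0..1}" and AB: "A \<subseteq> B" "B \<subseteq> crit n"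
  shows "mu_e N x \<alpha> A \<le> mu_e N x \<alpha> B"
proof (cases "A = {}")
  case True
  have "0 \<le> e_fun N x \<alpha> B"
    using alpha by (auto simp: e_fun_ge_iff godel_imp_def)
  then show ?thesis using True by (simp add: mu_e_def)
next
  case False
  have "e_fun N x \<alpha> A \<le> godel_imp (m_val x k B) (\<alpha> k)" if k: "k \<in> {1..N}" for k
  proof -
    have "m_val x k B \<le> m_val x k A"
      using m_val_antimono[OF AB(1) finite_subset[OF AB(2) finite_crit] False] .
    then have "godel_imp (m_val x k A) (\<alpha> k) \<le> godel_imp (m_val x k B) (\<alpha> k)"
      using alpha k by (intro godel_imp_antimono) auto
    then show ?thesis using e_fun_le[OF k] by (rule order_trans[rotated])
  qed
  then have "e_fun N x \<alpha> A \<le> e_fun N x \<alpha> B"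
    by (simp add: e_fun_ge_iff e_fun_le_one)
  then show ?thesis using False AB by (auto simp: mu_e_def)
qed

lemma mu_f_mono:
  assumes alpha: "\<forall>k \<in> {1..N}. \<alpha> k \<in> {0..1}" and AB: "A \<subseteq> B" "B \<subseteq> crit n"
  shows "mu_f n N x \<alpha> A \<le> mu_f n N x \<alpha> B"
proof (cases "B = crit n")
  case True
  have "f_fun n N x \<alpha> A \<le> 1"
    using f_fun_in[of n N x \<alpha> A] alpha by auto
  then show ?thesis using True by (simp add: mu_f_def)
next
  case False
  have "eps_prod (gamma_val n x k A) (\<alpha> k) \<le> f_fun n N x \<alpha> B" if k: "k \<in> {1..N}" for k
  proof -
    have "gamma_val n x k B \<le> gamma_val n x k A"
      using gamma_val_antimono[OF AB(1)] AB(2) False by blast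
    then have "eps_prod (gamma_val n x k A) (\<alpha> k) \<le> eps_prod (gamma_val n x k B) (\<alpha> k)"
      using alpha k by (intro eps_prod_antimono) auto
    then show ?thesis using f_fun_ge[OF k] by (rule order_trans)
  qed
  then have "f_fun n N x \<alpha> A \<le> f_fun n N x \<alpha> B"
    by (simp add: f_fun_le_iff f_fun_nonneg)
  then show ?thesis using False AB by (auto simp: mu_f_def)
qed

lemma sugeno_mu_e_le:
  assumes k: "k \<in> {1..N}" and "0 \<le> \<alpha> k"
  shows "sugeno n (mu_e N x \<alpha>) (x k) \<le> \<alpha> k"
  unfolding sugeno_le_iff
proof (intro allI impI)
  fix A
  show "min (minset (x k) A) (mu_e N x \<alpha> A) \<le> \<alpha> k"
  proof (cases "A = {}")
    case True
    then show ?thesis using \<open>0 \<le> \<alpha> k\<close> by (simp add: mu_e_def)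
  next
    case False
    have "e_fun N x \<alpha> A \<le> godel_imp (m_val x k A) (\<alpha> k)"
      by (rule e_fun_le[OF k])
    then show ?thesis
      using False by (cases "m_val x k A \<le> \<alpha> k") (auto simp: mu_e_def godel_imp_def minset_eq_m_val)
  qed
qed

lemma sugeno_mu_f_ge:
  assumes k: "k \<in> {1..N}" and "\<alpha> k \<le> 1"
  shows "\<alpha> k \<le> sugeno n (mu_f n N x \<alpha>) (x k)"
proof -
  define A where "A = {i \<in> crit n. \<alpha> k \<le> x k i}"
  have A_sub: "A \<subseteq> crit n" by (auto simp: A_def)
  have "\<alpha> k \<le> minset (x k) A"
    using \<open>\<alpha> k \<le> 1\<close> by (simp add: minset_ge_iff finite_subset[OF A_sub] A_def)
  moreover have "\<alpha> k \<le> mu_f n N x \<alpha> A"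
  proof (cases "A = crit n")
    case True
    then show ?thesis using \<open>\<alpha> k \<le> 1\<close> by (simp add: mu_f_def)
  next
    case False
    with A_sub have "gamma_val n x k A < \<alpha> k"
      by (subst gamma_val_less_iff) (auto simp: A_def)
    then have "\<alpha> k \<le> f_fun n N x \<alpha> A"
      using f_fun_ge[OF k, of n x A \<alpha>] by (simp add: eps_prod_def)
    then show ?thesis using False by (simp add: mu_f_def)
  qed
  ultimately show ?thesis
    using A_sub sugeno_ge_iff min.boundedI by blast
qed

lemma capacity_mu_e:
  assumes cap: "capacity L n \<mu>" and rep: "represents n N x \<alpha> \<mu>"
    and scale: "L \<subseteq> {0..1}" and alpha: "\<forall>k \<in> {1..N}. \<alpha> k \<in> L"
  shows "capacity L n (mu_e N x \<alpha>)"
proof -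
  have "1 \<le> mu_e N x \<alpha> (crit n)"
    using capacity_le_mu_e[OF cap rep order_refl] cap by (simp add: capacity_def)
  then have top: "mu_e N x \<alpha> (crit n) = 1"
    using e_fun_le_one[of N x \<alpha> "crit n"] capacity_crit_nonempty[OF cap] by (simp add: mu_e_def)
  have "mu_e N x \<alpha> A \<in> L" for A
    using e_fun_in[of N x \<alpha> A] capacity_scale_contains_0_1[OF cap] alpha by (auto simp: mu_e_def)
  moreover have "\<forall>k \<in> {1..N}. \<alpha> k \<in> {0..1}"
    using alpha scale by blast
  moreover have "mu_e N x \<alpha> {} = 0"
    by (simp add: mu_e_def)
  ultimately show ?thesis
    unfolding capacity_def using top mu_e_mono by blast
qed

lemma capacity_mu_f:
  assumes cap: "capacity L n \<mu>" and rep: "represents n N x \<alpha> \<mu>"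
    and scale: "L \<subseteq> {0..1}" and alpha: "\<forall>k \<in> {1..N}. \<alpha> k \<in> L"
  shows "capacity L n (mu_f n N x \<alpha>)"
proof -
  have "mu_f n N x \<alpha> {} \<le> 0"
    using mu_f_le_capacity[OF cap rep empty_subsetI] cap by (simp add: capacity_def)
  then have bot: "mu_f n N x \<alpha> {} = 0"
    using f_fun_nonneg[of n N x \<alpha> "{}"] capacity_crit_nonempty[OF cap] by (simp add: mu_f_def)
  have "mu_f n N x \<alpha> A \<in> L" for A
    using f_fun_in[of n N x \<alpha> A] capacity_scale_contains_0_1[OF cap] alpha by (auto simp: mu_f_def)
  moreover have "\<forall>k \<in> {1..N}. \<alpha> k \<in> {0..1}"
    using alpha scale by blast
  moreover have "mu_f n N x \<alpha> (crit n) = 1"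
    by (simp add: mu_f_def)
  ultimately show ?thesis
    unfolding capacity_def using bot mu_f_mono by blast
qed

lemma represents_mu_e:
  assumes cap: "capacity L n \<mu>" and rep: "represents n N x \<alpha> \<mu>"
    and alpha: "\<forall>k \<in> {1..N}. 0 \<le> \<alpha> k"
  shows "represents n N x \<alpha> (mu_e N x \<alpha>)"
  unfolding represents_def
proof
  fix k assume k: "k \<in> {1..N}"
  have "\<alpha> k = sugeno n \<mu> (x k)"
    using represents_sugeno[OF rep k] by simp
  also have "\<dots> \<le> sugeno n (mu_e N x \<alpha>) (x k)"
    using capacity_le_mu_e[OF cap rep] by (rule sugeno_mono)
  finally show "sugeno n (mu_e N x \<alpha>) (x k) = \<alpha> k"
    using sugeno_mu_e_le[OF k] alpha k by (simp add: antisym)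
qed

lemma represents_mu_f:
  assumes cap: "capacity L n \<mu>" and rep: "represents n N x \<alpha> \<mu>"
    and alpha: "\<forall>k \<in> {1..N}. \<alpha> k \<le> 1"
  shows "represents n N x \<alpha> (mu_f n N x \<alpha>)"
  unfolding represents_def
proof
  fix k assume k: "k \<in> {1..N}"
  have "sugeno n (mu_f n N x \<alpha>) (x k) \<le> sugeno n \<mu> (x k)"
    using mu_f_le_capacity[OF cap rep] by (rule sugeno_mono)
  also have "\<dots> = \<alpha> k"
    using represents_sugeno[OF rep k] .
  finally show "sugeno n (mu_f n N x \<alpha>) (x k) = \<alpha> k"
    using sugeno_mu_f_ge[OF k] alpha k by (simp add: antisym)
qed

theorem corollary1:
  fixes L :: "real set" and n N :: nat
    and x :: "nat \<Rightarrow> nat \<Rightarrow> real" and \<alpha> :: "nat \<Rightarrow> real"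
  assumes scale: "valid_scale L"
    and data_x: "\<forall>k \<in> {1..N}. \<forall>i \<in> crit n. x k i \<in> L"
    and data_alpha: "\<forall>k \<in> {1..N}. \<alpha> k \<in> L"
    and exists: "\<exists>\<mu>. capacity L n \<mu> \<and> represents n N x \<alpha> \<mu>"
  shows
    "(capacity L n (mu_e N x \<alpha>) \<and> represents n N x \<alpha> (mu_e N x \<alpha>) \<and>
      (\<forall>\<mu>. capacity L n \<mu> \<and> represents n N x \<alpha> \<mu> \<longrightarrow>
            (\<forall>A \<subseteq> crit n. \<mu> A \<le> mu_e N x \<alpha> A)))
   \<and> (capacity L n (mu_f n N x \<alpha>) \<and> represents n N x \<alpha> (mu_f n N x \<alpha>) \<and>
      (\<forall>\<mu>. capacity L n \<mu> \<and> represents n N x \<alpha> \<mu> \<longrightarrow>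
            (\<forall>A \<subseteq> crit n. mu_f n N x \<alpha> A \<le> \<mu> A)))
   \<and> (\<forall>\<mu>. capacity L n \<mu> \<and> represents n N x \<alpha> \<mu> \<longrightarrow>
            (\<forall>A \<subseteq> crit n. mu_f n N x \<alpha> A \<le> \<mu> A \<and> \<mu> A \<le> mu_e N x \<alpha> A))"
proof -
  obtain \<mu> where cap: "capacity L n \<mu>" and rep: "represents n N x \<alpha> \<mu>"
    using exists by blast
  have L01: "L \<subseteq> {0..1}"
    using scale by (auto simp: valid_scale_def)
  with data_alpha have alpha_ge0: "\<forall>k \<in> {1..N}. 0 \<le> \<alpha> k"
    and alpha_le1: "\<forall>k \<in> {1..N}. \<alpha> k \<le> 1"
    by fastforce+
  have upper: "\<forall>\<nu>. capacity L n \<nu> \<and> represents n N x \<alpha> \<nu> \<longrightarrow>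
      (\<forall>A \<subseteq> crit n. \<nu> A \<le> mu_e N x \<alpha> A)"
    using capacity_le_mu_e by blast
  have lower: "\<forall>\<nu>. capacity L n \<nu> \<and> represents n N x \<alpha> \<nu> \<longrightarrow>
      (\<forall>A \<subseteq> crit n. mu_f n N x \<alpha> A \<le> \<nu> A)"
    using mu_f_le_capacity by blast
  show ?thesis
    using capacity_mu_e[OF cap rep L01 data_alpha] represents_mu_e[OF cap rep alpha_ge0]
      capacity_mu_f[OF cap rep L01 data_alpha] represents_mu_f[OF cap rep alpha_le1]
      upper lower
    by blast
qed

end
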